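(* Let $G$ be an extremal uniformly $3$-connected graph on $n=3k+\ell\ge 5$ vertices, where $k\in\mathbb{N}\setminus\{1\}$ and $\ell\in\{-1,0,1\}$. Consider a construction of $G$ from complete graphs on four vertices using $j$ bridge operations, $t$ edge joins, $p$ primary spoke operations and $s$ secondary spoke operations. Then: (1) $p=k-1$; (2) if $\ell=-1$, then $j=k-2$ and $t=s=0$; (3) if $\ell=0$, then $j=k-2$, $t=0$, $s=1$; (4) if $\ell=1$, then either $j=k-1$ and $t=s=0$, or $j=k-2$, $t=1$, $s=0$, or $j=k-2$, $t=0$, $s=2$.
   Context: All graphs are finite and simple. A graph on at least $k+1$ vertices is uniformly $k$-connected if each pair of its vertices is connected by $k$ and not more than $k$ independent paths. For a graph $G$, $\nu(G)$ is the number of vertices of $G$ whose degree equals the minimum degree of $G$. Every uniformly $3$-connected graph $G$ on $n$ vertices satisfies $\nu(G)\ge\lceil(2n+2)/3\rceil$; $G$ is called extremal if equality holds. Operations. (1) Edge join: for a graph $H$ and two distinct edges $st, vw\in E(H)$ (which may share one endvertex), form $H + x + y - st - vw + sx + xt + vy + yw + xy$ with new vertices $x,y$; every $3$-regular $3$-connected graph arises from $K_4$ by edge joins, and edge joins are applied to $3$-regular $3$-connected graphs. (2) Bridge operation: for vertex-disjoint graphs $G_1,G_2$ with $v_1\in V(G_1)$, $v_2\in V(G_2)$, $N(v_1)=\{x_1,y_1,z_1\}$, $N(v_2)=\{x_2,y_2,z_2\}$, form $(G_1-v_1)\cup(G_2-v_2)+x_1x_2+y_1y_2+z_1z_2$.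 (3) Spoke operation: for a graph $H$ with distinct vertices $v,w,x$ with $vw\in E(H)$ and $\deg(z)=3$ for all $z\in V(H)\setminus\{x\}$, form $H+y-vw+vy+wy+xy$ with a new vertex $y$; it is primary if $\deg(x)=3$ and secondary if $\deg(x)>3$. It is known that a graph is uniformly $3$-connected if and only if it belongs to the smallest class containing all $3$-regular $3$-connected graphs and closed under bridge operations and spoke operations; thus each uniformly $3$-connected graph can be constructed from copies of $K_4$ by these operations. *)

theory Defs
  imports Complex_Main
begin

type_synonym 'a graph = "'a set \<times> 'a set set"

definition verts :: "'a graph \<Rightarrow> 'a set" where "verts G = fst G"
definition edges :: "'a graph \<Rightarrow> 'a set set" where "edges G = snd G"

definition simple_graph :: "'a graph \<Rightarrow> bool" where
  "simple_graph G \<longleftrightarrow> finite (verts G) \<and>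
     (\<forall>e\<in>edges G. \<exists>a b. a \<noteq> b \<and> a \<in> verts G \<and> b \<in> verts G \<and> e = {a, b})"

definition adj :: "'a graph \<Rightarrow> 'a \<Rightarrow> 'a \<Rightarrow> bool" where
  "adj G a b \<longleftrightarrow> {a, b} \<in> edges G \<and> a \<noteq> b"

definition nbrs :: "'a graph \<Rightarrow> 'a \<Rightarrow> 'a set" where
  "nbrs G v = {u \<in> verts G. adj G v u}"

definition degree :: "'a graph \<Rightarrow> 'a \<Rightarrow> nat" where
  "degree G v = card (nbrs G v)"

definition min_degree :: "'a graph \<Rightarrow> nat" where
  "min_degree G = Min (degree G ` verts G)"

definition nu :: "'a graph \<Rightarrow> nat" where
  "nu G = card {v \<in> verts G. degree G v = min_degree G}"

definition cubic :: "'a graph \<Rightarrow> bool" where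
  "cubic G \<longleftrightarrow> (\<forall>v\<in>verts G. degree G v = 3)"

definition is_path :: "'a graph \<Rightarrow> 'a \<Rightarrow> 'a \<Rightarrow> 'a list \<Rightarrow> bool" where
  "is_path G u v P \<longleftrightarrow> P \<noteq> [] \<and> hd P = u \<and> last P = v \<and> distinct P \<and>
     set P \<subseteq> verts G \<and> (\<forall>i. Suc i < length P \<longrightarrow> adj G (P ! i) (P ! Suc i))"

definition interior :: "'a list \<Rightarrow> 'a set" where
  "interior P = set (butlast (tl P))"

definition indep_paths :: "'a graph \<Rightarrow> 'a \<Rightarrow> 'a \<Rightarrow> 'a list set \<Rightarrow> bool" where
  "indep_paths G u v \<P> \<longleftrightarrow> finite \<P> \<and> (\<forall>P\<in>\<P>. is_path G u v P) \<and>
     (\<forall>P\<in>\<P>. \<forall>Q\<in>\<P>. P \<noteq> Q \<longrightarrow> interior P \<inter> interior Q = {})"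

definition uniformly_connected :: "nat \<Rightarrow> 'a graph \<Rightarrow> bool" where
  "uniformly_connected k G \<longleftrightarrow> card (verts G) \<ge> k + 1 \<and>
     (\<forall>u\<in>verts G. \<forall>v\<in>verts G. u \<noteq> v \<longrightarrow>
        (\<exists>\<P>. indep_paths G u v \<P> \<and> card \<P> = k) \<and>
        (\<forall>\<P>. indep_paths G u v \<P> \<longrightarrow> card \<P> \<le> k))"

definition connected_graph :: "'a graph \<Rightarrow> bool" where
  "connected_graph G \<longleftrightarrow> (\<forall>u\<in>verts G. \<forall>v\<in>verts G. \<exists>P. is_path G u v P)"

definition delete_verts :: "'a graph \<Rightarrow> 'a set \<Rightarrow> 'a graph" where
  "delete_verts G S = (verts G - S, {e \<in> edges G. e \<inter> S = {}})"

definition k_connected :: "nat \<Rightarrow> 'a graph \<Rightarrow> bool" where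
  "k_connected k G \<longleftrightarrow> card (verts G) > k \<and>
     (\<forall>S \<subseteq> verts G. card S < k \<longrightarrow> connected_graph (delete_verts G S))"

definition extremal :: "'a graph \<Rightarrow> bool" where
  "extremal G \<longleftrightarrow> int (nu G) = \<lceil>(2 * real (card (verts G)) + 2) / 3\<rceil>"

definition graph_iso :: "'a graph \<Rightarrow> 'b graph \<Rightarrow> bool" where
  "graph_iso H G \<longleftrightarrow> (\<exists>f. bij_betw f (verts H) (verts G) \<and>
     (\<forall>a\<in>verts H. \<forall>b\<in>verts H. {a, b} \<in> edges H \<longleftrightarrow> {f a, f b} \<in> edges G))"

definition K4 :: "'a set \<Rightarrow> 'a graph" where
  "K4 A = (A, {{a, b} | a b. a \<in> A \<and> b \<in> A \<and> a \<noteq> b})"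

definition edge_join :: "'a graph \<Rightarrow> 'a \<Rightarrow> 'a \<Rightarrow> 'a \<Rightarrow> 'a \<Rightarrow> 'a \<Rightarrow> 'a \<Rightarrow> 'a graph" where
  "edge_join H s t v w x y =
     (verts H \<union> {x, y},
      (edges H - {{s, t}, {v, w}}) \<union> {{s, x}, {x, t}, {v, y}, {y, w}, {x, y}})"

definition bridge_op :: "'a graph \<Rightarrow> 'a \<Rightarrow> 'a \<Rightarrow> 'a \<Rightarrow> 'a \<Rightarrow>
                         'a graph \<Rightarrow> 'a \<Rightarrow> 'a \<Rightarrow> 'a \<Rightarrow> 'a \<Rightarrow> 'a graph" where
  "bridge_op G1 v1 x1 y1 z1 G2 v2 x2 y2 z2 =
     ((verts G1 - {v1}) \<union> (verts G2 - {v2}),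
      {e \<in> edges G1. v1 \<notin> e} \<union> {e \<in> edges G2. v2 \<notin> e} \<union> {{x1, x2}, {y1, y2}, {z1, z2}})"

definition spoke_op :: "'a graph \<Rightarrow> 'a \<Rightarrow> 'a \<Rightarrow> 'a \<Rightarrow> 'a \<Rightarrow> 'a graph" where
  "spoke_op H v w x y =
     (verts H \<union> {y}, (edges H - {{v, w}}) \<union> {{v, y}, {w, y}, {x, y}})"

inductive constr :: "nat graph \<Rightarrow> nat \<Rightarrow> nat \<Rightarrow> nat \<Rightarrow> nat \<Rightarrow> bool" where
  base: "card A = 4 \<Longrightarrow> constr (K4 A) 0 0 0 0"
| join: "\<lbrakk> constr H j t p s; cubic H; k_connected 3 H;
           {a, b} \<in> edges H; {c, d} \<in> edges H; {a, b} \<noteq> {c, d};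
           x \<notin> verts H; y \<notin> verts H; x \<noteq> y \<rbrakk>
         \<Longrightarrow> constr (edge_join H a b c d x y) j (Suc t) p s"
| bridge: "\<lbrakk> constr G1 j1 t1 p1 s1; constr G2 j2 t2 p2 s2;
             verts G1 \<inter> verts G2 = {};
             v1 \<in> verts G1; nbrs G1 v1 = {x1, y1, z1}; card {x1, y1, z1} = 3;
             v2 \<in> verts G2; nbrs G2 v2 = {x2, y2, z2}; card {x2, y2, z2} = 3 \<rbrakk>
         \<Longrightarrow> constr (bridge_op G1 v1 x1 y1 z1 G2 v2 x2 y2 z2)
               (Suc (j1 + j2)) (t1 + t2) (p1 + p2) (s1 + s2)"
| spoke_primary: "\<lbrakk> constr H j t p s; v \<in> verts H; w \<in> verts H; x \<in> verts H;
             v \<noteq> w; v \<noteq> x; w \<noteq> x; {v, w} \<in> edges H;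
             \<forall>z\<in>verts H - {x}. degree H z = 3; degree H x = 3; y \<notin> verts H \<rbrakk>
         \<Longrightarrow> constr (spoke_op H v w x y) j t (Suc p) s"
| spoke_secondary: "\<lbrakk> constr H j t p s; v \<in> verts H; w \<in> verts H; x \<in> verts H;
             v \<noteq> w; v \<noteq> x; w \<noteq> x; {v, w} \<in> edges H;
             \<forall>z\<in>verts H - {x}. degree H z = 3; degree H x > 3; y \<notin> verts H \<rbrakk>
         \<Longrightarrow> constr (spoke_op H v w x y) j t p (Suc s)"

end

theory Submission
  imports Defs
begin

(* Every operation of a construction keeps the minimum degree at 3, and a vertex of degree
   greater than 3 arises exactly once per primary spoke operation: secondary spokes raise an
   already heavy vertex, bridges and edge joins create none. Hence nu(H) = n - p, while counting
   vertices gives n = 2j + 4 + 2t + p + s, and p <= j + 1 since a primary spoke needs a cubic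
   graph. Extremality, nu = ceil((2n + 2)/3), then forces p = k - 1, and parity fixes j, t, s. *)

lemma verts_pair [simp]: "verts (V, E) = V"
  by (simp add: verts_def)

lemma edges_pair [simp]: "edges (V, E) = E"
  by (simp add: edges_def)

lemma simple_graph_iff:
  "simple_graph G \<longleftrightarrow> finite (verts G) \<and> (\<forall>e\<in>edges G. e \<subseteq> verts G \<and> card e = 2)"
  unfolding simple_graph_def card_2_iff by (intro conj_cong refl ball_cong) auto

lemma simple_graph_finite_verts: "simple_graph G \<Longrightarrow> finite (verts G)"
  by (simp add: simple_graph_def)

lemma simple_graph_edgeD:
  assumes "simple_graph G" "{a, b} \<in> edges G"
  shows "a \<in> verts G" "b \<in> verts G" "a \<noteq> b"
  using assms unfolding simple_graph_def by (auto simp: doubleton_eq_iff)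

lemma mem_nbrs_iff: "u \<in> nbrs G v \<longleftrightarrow> u \<in> verts G \<and> u \<noteq> v \<and> {v, u} \<in> edges G"
  by (auto simp: nbrs_def adj_def)

lemma finite_nbrs: "simple_graph G \<Longrightarrow> finite (nbrs G v)"
  by (simp add: nbrs_def simple_graph_finite_verts)

lemma verts_K4 [simp]: "verts (K4 A) = A"
  by (simp add: K4_def)

lemma edges_K4: "{a, b} \<in> edges (K4 A) \<longleftrightarrow> a \<in> A \<and> b \<in> A \<and> a \<noteq> b"
  by (auto simp: K4_def doubleton_eq_iff)

lemma simple_graph_K4:
  assumes "card A = 4"
  shows "simple_graph (K4 A)"
proof -
  have "finite A"
    using assms card.infinite by fastforce
  then show ?thesis
    by (auto simp: simple_graph_iff K4_def)
qed

lemma cubic_K4: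
  assumes "card A = 4"
  shows "cubic (K4 A)"
proof -
  have "nbrs (K4 A) v = A - {v}" if "v \<in> A" for v
    using that by (auto simp: mem_nbrs_iff edges_K4)
  then show ?thesis
    using assms by (simp add: cubic_def degree_def K4_def)
qed

definition add_edge :: "'a graph \<Rightarrow> 'a \<Rightarrow> 'a \<Rightarrow> 'a graph" where
  "add_edge H x y = (verts H, insert {x, y} (edges H))"

definition subdivide :: "'a graph \<Rightarrow> 'a \<Rightarrow> 'a \<Rightarrow> 'a \<Rightarrow> 'a graph" where
  "subdivide H v w y = (insert y (verts H), (edges H - {{v, w}}) \<union> {{v, y}, {w, y}})"

lemma simple_graph_add_edge:
  assumes "simple_graph H" "x \<in> verts H" "y \<in> verts H" "x \<noteq> y"
  shows "simple_graph (add_edge H x y)"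
  using assms by (auto simp: add_edge_def simple_graph_iff)

lemma degree_add_edge:
  assumes H: "simple_graph H" and xy: "x \<in> verts H" "y \<in> verts H" "x \<noteq> y" "{x, y} \<notin> edges H"
  shows "degree (add_edge H x y) u = (if u = x \<or> u = y then Suc (degree H u) else degree H u)"
proof -
  have "nbrs (add_edge H x y) u =
      (if u = x then insert y (nbrs H u) else if u = y then insert x (nbrs H u) else nbrs H u)"
    using xy by (auto simp: mem_nbrs_iff add_edge_def doubleton_eq_iff)
  moreover have "y \<notin> nbrs H x" "x \<notin> nbrs H y"
    using xy by (auto simp: mem_nbrs_iff insert_commute)
  ultimately show ?thesis
    using xy finite_nbrs[OF H] by (simp add: degree_def)
qed

lemma simple_graph_subdivide:
  assumes "simple_graph H" "{v, w} \<in> edges H" "y \<notin> verts H"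
  shows "simple_graph (subdivide H v w y)"
  using assms simple_graph_edgeD[OF assms(1,2)]
  by (auto simp: subdivide_def simple_graph_iff card_insert_if)

lemma nbrs_subdivide_new:
  assumes "simple_graph H" "{v, w} \<in> edges H" "y \<notin> verts H"
  shows "nbrs (subdivide H v w y) y = {v, w}"
  using assms simple_graph_edgeD[OF assms(1)]
  by (auto simp: mem_nbrs_iff subdivide_def doubleton_eq_iff)

lemma degree_subdivide_new:
  assumes "simple_graph H" "{v, w} \<in> edges H" "y \<notin> verts H"
  shows "degree (subdivide H v w y) y = 2"
  using nbrs_subdivide_new[OF assms] simple_graph_edgeD[OF assms(1,2)]
  by (simp add: degree_def)

lemma degree_subdivide:
  assumes H: "simple_graph H" and vw: "{v, w} \<in> edges H" and y: "y \<notin> verts H"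
    and u: "u \<in> verts H"
  shows "degree (subdivide H v w y) u = degree H u"
proof -
  have "v \<noteq> w" using simple_graph_edgeD[OF H vw] by simp
  then have "nbrs (subdivide H v w y) u =
      (if u = v then insert y (nbrs H u - {w}) else if u = w then insert y (nbrs H u - {v})
       else nbrs H u)"
    using u y simple_graph_edgeD[OF H]
    by (auto simp: mem_nbrs_iff subdivide_def doubleton_eq_iff)
  moreover have across: "u = v \<Longrightarrow> w \<in> nbrs H u" "u = w \<Longrightarrow> v \<in> nbrs H u"
    using vw simple_graph_edgeD[OF H vw] by (auto simp: mem_nbrs_iff insert_commute)
  moreover have "y \<notin> nbrs H u"
    using y by (simp add: mem_nbrs_iff)
  moreover have "u \<in> {v, w} \<Longrightarrow> 0 < card (nbrs H u)"
    using across finite_nbrs[OF H] card_gt_0_iff by blast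
  ultimately show ?thesis
    using finite_nbrs[OF H] by (auto simp: degree_def)
qed

lemma verts_spoke_op [simp]: "verts (spoke_op H v w x y) = insert y (verts H)"
  by (simp add: spoke_op_def)

lemma spoke_op_eq_add_edge_subdivide: "spoke_op H v w x y = add_edge (subdivide H v w y) x y"
  by (auto simp: spoke_op_def add_edge_def subdivide_def)

context
  fixes H :: "'a graph" and v w x y :: 'a
  assumes H: "simple_graph H" and vw: "{v, w} \<in> edges H" and x: "x \<in> verts H" "x \<noteq> v" "x \<noteq> w"
    and y: "y \<notin> verts H"
begin

private lemma spoke_edge_fresh: "{x, y} \<notin> edges (subdivide H v w y)"
proof
  assume "{x, y} \<in> edges (subdivide H v w y)"
  then have "x \<in> nbrs (subdivide H v w y) y"
    using x y by (auto simp: mem_nbrs_iff subdivide_def insert_commute)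
  then show False
    using x nbrs_subdivide_new[OF H vw y] by simp
qed

lemma simple_graph_spoke_op: "simple_graph (spoke_op H v w x y)"
  unfolding spoke_op_eq_add_edge_subdivide
  using x y by (intro simple_graph_add_edge simple_graph_subdivide H vw) (auto simp: subdivide_def)

lemma degree_spoke_op:
  "u \<in> verts H \<Longrightarrow> degree (spoke_op H v w x y) u = (if u = x then Suc (degree H u) else degree H u)"
  unfolding spoke_op_eq_add_edge_subdivide
  using x y spoke_edge_fresh simple_graph_subdivide[OF H vw y] degree_subdivide[OF H vw y]
  by (subst degree_add_edge) (auto simp: subdivide_def)

lemma degree_spoke_op_new: "degree (spoke_op H v w x y) y = 3"
  unfolding spoke_op_eq_add_edge_subdivide
  using x y spoke_edge_fresh simple_graph_subdivide[OF H vw y] degree_subdivide_new[OF H vw y]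
  by (subst degree_add_edge) (auto simp: subdivide_def)

end

lemma edge_join_eq_spoke_op_subdivide:
  assumes "simple_graph H" "{c, d} \<in> edges H" "x \<notin> verts H"
  shows "edge_join H a b c d x y = spoke_op (subdivide H a b x) c d x y"
proof -
  have "x \<noteq> c" "x \<noteq> d"
    using assms simple_graph_edgeD[OF assms(1,2)] by auto
  then show ?thesis
    by (auto simp: edge_join_def spoke_op_def subdivide_def doubleton_eq_iff insert_commute)
qed

context
  fixes H :: "'a graph" and a b c d x y :: 'a
  assumes H: "simple_graph H" and ab: "{a, b} \<in> edges H" and cd: "{c, d} \<in> edges H"
    and ab_cd: "{a, b} \<noteq> {c, d}" and xy: "x \<notin> verts H" "y \<notin> verts H" "x \<noteq> y"
begin

private lemma edge_join_spoke_conditions: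
  "simple_graph (subdivide H a b x)" "{c, d} \<in> edges (subdivide H a b x)"
  "x \<in> verts (subdivide H a b x)" "x \<noteq> c" "x \<noteq> d" "y \<notin> verts (subdivide H a b x)"
  using simple_graph_subdivide[OF H ab xy(1)] cd ab_cd xy simple_graph_edgeD[OF H cd]
  by (auto simp: subdivide_def)

lemma simple_graph_edge_join: "simple_graph (edge_join H a b c d x y)"
  unfolding edge_join_eq_spoke_op_subdivide[OF H cd xy(1)]
  using edge_join_spoke_conditions by (rule simple_graph_spoke_op)

lemma cubic_edge_join:
  assumes "cubic H"
  shows "cubic (edge_join H a b c d x y)"
  unfolding cubic_def
proof
  fix u assume u: "u \<in> verts (edge_join H a b c d x y)"
  note spoke = edge_join_spoke_conditions
  show "degree (edge_join H a b c d x y) u = 3"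
  proof (cases "u = y")
    case True
    then show ?thesis
      unfolding edge_join_eq_spoke_op_subdivide[OF H cd xy(1)]
      using degree_spoke_op_new[OF spoke] by simp
  next
    case False
    then have "u \<in> verts (subdivide H a b x)"
      using u by (auto simp: edge_join_def subdivide_def)
    then show ?thesis
      unfolding edge_join_eq_spoke_op_subdivide[OF H cd xy(1)]
      using assms xy degree_spoke_op[OF spoke] degree_subdivide[OF H ab xy(1)]
        degree_subdivide_new[OF H ab xy(1)]
      by (auto simp: cubic_def subdivide_def)
  qed
qed

end

lemma verts_bridge_op: "verts (bridge_op G1 v1 x1 y1 z1 G2 v2 x2 y2 z2) = (verts G1 - {v1}) \<union> (verts G2 - {v2})"
  by (simp add: bridge_op_def)

lemma bridge_op_commute:
  "bridge_op G1 v1 x1 y1 z1 G2 v2 x2 y2 z2 = bridge_op G2 v2 x2 y2 z2 G1 v1 x1 y1 z1"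
  by (auto simp: bridge_op_def insert_commute)

context
  fixes G1 G2 :: "'a graph" and v1 x1 y1 z1 v2 x2 y2 z2 :: 'a
  assumes G: "simple_graph G1" "simple_graph G2" and disj: "verts G1 \<inter> verts G2 = {}"
    and v1: "v1 \<in> verts G1" "nbrs G1 v1 = {x1, y1, z1}"
    and v2: "v2 \<in> verts G2" "nbrs G2 v2 = {x2, y2, z2}"
begin

private lemma bridge_ends: "{x1, y1, z1} \<subseteq> verts G1 - {v1}" "{x2, y2, z2} \<subseteq> verts G2 - {v2}"
  unfolding v1(2)[symmetric] v2(2)[symmetric] by (auto simp: mem_nbrs_iff)

lemma simple_graph_bridge_op: "simple_graph (bridge_op G1 v1 x1 y1 z1 G2 v2 x2 y2 z2)"
proof -
  have "x1 \<noteq> x2" "y1 \<noteq> y2" "z1 \<noteq> z2"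
    using bridge_ends disj by auto
  then show ?thesis
    using G bridge_ends by (auto simp: simple_graph_iff bridge_op_def)
qed

lemma card_verts_bridge_op:
  "card (verts (bridge_op G1 v1 x1 y1 z1 G2 v2 x2 y2 z2)) = card (verts G1) - 1 + (card (verts G2) - 1)"
proof -
  have "card ((verts G1 - {v1}) \<union> (verts G2 - {v2})) = card (verts G1 - {v1}) + card (verts G2 - {v2})"
    using G disj by (intro card_Un_disjoint) (auto simp: simple_graph_finite_verts)
  then show ?thesis
    using v1(1) v2(1) by (simp add: bridge_op_def)
qed

lemma degree_bridge_op_left:
  assumes distinct: "card {x1, y1, z1} = 3" and u: "u \<in> verts G1" "u \<noteq> v1"
  shows "degree (bridge_op G1 v1 x1 y1 z1 G2 v2 x2 y2 z2) u = degree G1 u"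
proof -
  have ends: "x1 \<in> verts G1" "y1 \<in> verts G1" "z1 \<in> verts G1" "x1 \<noteq> v1" "y1 \<noteq> v1" "z1 \<noteq> v1"
    "x2 \<in> verts G2" "y2 \<in> verts G2" "z2 \<in> verts G2" "x2 \<noteq> v2" "y2 \<noteq> v2" "z2 \<noteq> v2"
    using bridge_ends by auto
  define A where "A = (if u = x1 then {x2} else {}) \<union> (if u = y1 then {y2} else {})
    \<union> (if u = z1 then {z2} else {})"
  have nbrs_eq: "nbrs (bridge_op G1 v1 x1 y1 z1 G2 v2 x2 y2 z2) u = (nbrs G1 u - {v1}) \<union> A"
  proof -
    have "u \<notin> verts G2"
      using u disj by blast
    then have edge_iff: "{u, z} \<in> edges (bridge_op G1 v1 x1 y1 z1 G2 v2 x2 y2 z2)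
        \<longleftrightarrow> ({u, z} \<in> edges G1 \<and> z \<noteq> v1) \<or> z \<in> A" for z
      using u ends simple_graph_edgeD(1)[OF G(2)]
      by (auto simp: A_def bridge_op_def doubleton_eq_iff)
    have "A \<subseteq> verts G2 - {v2}"
      using ends by (auto simp: A_def)
    then show ?thesis
      using u \<open>u \<notin> verts G2\<close> simple_graph_edgeD(2)[OF G(1)]
      by (auto simp: mem_nbrs_iff edge_iff verts_bridge_op)
  qed
  have v1_nbr: "v1 \<in> nbrs G1 u \<longleftrightarrow> u \<in> {x1, y1, z1}"
    using v1 u unfolding nbrs_def adj_def by (auto simp: insert_commute)
  have "x1 \<noteq> y1" "x1 \<noteq> z1" "y1 \<noteq> z1"
    using distinct by (auto simp: card_insert_if split: if_splits)
  then have card_A: "card A = (if u \<in> {x1, y1, z1} then 1 else 0)"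
    by (auto simp: A_def)
  have "A \<inter> nbrs G1 u = {}"
    using ends disj by (auto simp: A_def mem_nbrs_iff)
  then have "card ((nbrs G1 u - {v1}) \<union> A) = card (nbrs G1 u - {v1}) + card A"
    using finite_nbrs[OF G(1)] by (intro card_Un_disjoint) (auto simp: A_def)
  moreover have "v1 \<in> nbrs G1 u \<Longrightarrow> 0 < card (nbrs G1 u)"
    using finite_nbrs[OF G(1)] card_gt_0_iff by blast
  ultimately show ?thesis
    unfolding degree_def nbrs_eq using v1_nbr card_A by auto
qed

end

lemma degree_bridge_op:
  assumes "simple_graph G1" "simple_graph G2" "verts G1 \<inter> verts G2 = {}"
    and "v1 \<in> verts G1" "nbrs G1 v1 = {x1, y1, z1}" "card {x1, y1, z1} = 3"
    and "v2 \<in> verts G2" "nbrs G2 v2 = {x2, y2, z2}" "card {x2, y2, z2} = 3"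
    and u: "u \<in> verts (bridge_op G1 v1 x1 y1 z1 G2 v2 x2 y2 z2)"
  shows "degree (bridge_op G1 v1 x1 y1 z1 G2 v2 x2 y2 z2) u
    = (if u \<in> verts G1 then degree G1 u else degree G2 u)"
proof (cases "u \<in> verts G1")
  case True
  with u assms(3) have "u \<noteq> v1"
    by (auto simp: verts_bridge_op)
  with True show ?thesis
    using assms degree_bridge_op_left[of G1 G2 v1 x1 y1 z1 v2 x2 y2 z2 u] by simp
next
  case False
  with u have "u \<in> verts G2" "u \<noteq> v2"
    by (simp_all add: verts_bridge_op)
  with False show ?thesis
    using assms degree_bridge_op_left[of G2 G1 v2 x2 y2 z2 v1 x1 y1 z1 u]
    by (simp add: bridge_op_commute Int_commute)
qed

definition heavy_verts :: "'a graph \<Rightarrow> 'a set" where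
  "heavy_verts G = {v \<in> verts G. 3 < degree G v}"

lemma constr_simple_graph: "constr H j t p s \<Longrightarrow> simple_graph H"
proof (induction rule: constr.induct)
  case (base A)
  then show ?case by (rule simple_graph_K4)
next
  case (join H j t p s a b c d x y)
  then show ?case by (simp add: simple_graph_edge_join)
next
  case (bridge G1 j1 t1 p1 s1 G2 j2 t2 p2 s2 v1 x1 y1 z1 v2 x2 y2 z2)
  then show ?case by (simp add: simple_graph_bridge_op)
next
  case (spoke_primary H j t p s v w x y)
  then show ?case by (simp add: simple_graph_spoke_op)
next
  case (spoke_secondary H j t p s v w x y)
  then show ?case by (simp add: simple_graph_spoke_op)
qed

lemma constr_card_verts: "constr H j t p s \<Longrightarrow> card (verts H) = 2 * j + 4 + 2 * t + p + s"
proof (induction rule: constr.induct)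
  case (base A)
  then show ?case by simp
next
  case (join H j t p s a b c d x y)
  then have "finite (verts H)"
    using constr_simple_graph simple_graph_finite_verts by blast
  with join show ?case
    by (simp add: edge_join_def)
next
  case (bridge G1 j1 t1 p1 s1 G2 j2 t2 p2 s2 v1 x1 y1 z1 v2 x2 y2 z2)
  then show ?case
    by (simp add: card_verts_bridge_op constr_simple_graph)
next
  case (spoke_primary H j t p s a b x y)
  then have "finite (verts H)"
    using constr_simple_graph simple_graph_finite_verts by blast
  with spoke_primary show ?case
    by simp
next
  case (spoke_secondary H j t p s a b x y)
  then have "finite (verts H)"
    using constr_simple_graph simple_graph_finite_verts by blast
  with spoke_secondary show ?case
    by simp
qed

lemma constr_degree_ge: "constr H j t p s \<Longrightarrow> v \<in> verts H \<Longrightarrow> 3 \<le> degree H v"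
proof (induction arbitrary: v rule: constr.induct)
  case (base A)
  then show ?case
    using cubic_K4[of A] by (simp add: cubic_def)
next
  case (join H j t p s a b c d x y)
  then have "cubic (edge_join H a b c d x y)"
    by (simp add: cubic_edge_join constr_simple_graph)
  with join.prems show ?case
    by (simp add: cubic_def)
next
  case (bridge G1 j1 t1 p1 s1 G2 j2 t2 p2 s2 v1 x1 y1 z1 v2 x2 y2 z2)
  then show ?case
    by (auto simp: degree_bridge_op constr_simple_graph verts_bridge_op)
next
  case (spoke_primary H j t p s a b x y)
  then show ?case
    by (auto simp: degree_spoke_op degree_spoke_op_new constr_simple_graph)
next
  case (spoke_secondary H j t p s a b x y)
  then show ?case
    by (auto simp: degree_spoke_op degree_spoke_op_new constr_simple_graph)
qed

lemma finite_heavy_verts: "simple_graph G \<Longrightarrow> finite (heavy_verts G)"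
  by (simp add: heavy_verts_def simple_graph_finite_verts)

lemma heavy_verts_cubic: "cubic H \<Longrightarrow> heavy_verts H = {}"
  by (simp add: heavy_verts_def cubic_def)

lemma heavy_verts_single:
  assumes "x \<in> verts H" "\<forall>z\<in>verts H - {x}. degree H z = 3"
  shows "heavy_verts H = (if 3 < degree H x then {x} else {})"
proof -
  have cubic_off_x: "z = x \<or> degree H z = 3" if "z \<in> verts H" for z
    using assms(2) that by blast
  show ?thesis
    using assms(1) by (auto simp: heavy_verts_def dest: cubic_off_x)
qed

lemma heavy_verts_spoke_op:
  assumes "simple_graph H" "{v, w} \<in> edges H" "x \<in> verts H" "x \<noteq> v" "x \<noteq> w" "y \<notin> verts H"
    and "\<forall>z\<in>verts H - {x}. degree H z = 3" "3 \<le> degree H x"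
  shows "heavy_verts (spoke_op H v w x y) = {x}"
proof -
  have cubic_off_x: "z = x \<or> degree H z = 3" if "z \<in> verts H" for z
    using assms(7) that by blast
  have "\<forall>z\<in>verts (spoke_op H v w x y) - {x}. degree (spoke_op H v w x y) z = 3"
    using degree_spoke_op[OF assms(1-6)] degree_spoke_op_new[OF assms(1-6)] cubic_off_x
    by (metis DiffE insertE singletonI verts_spoke_op)
  moreover have "3 < degree (spoke_op H v w x y) x"
    using assms(3,8) degree_spoke_op[OF assms(1-6)] by simp
  ultimately show ?thesis
    using assms(3) heavy_verts_single[of x "spoke_op H v w x y"] by simp
qed

lemma heavy_verts_bridge_op:
  assumes "simple_graph G1" "simple_graph G2" "verts G1 \<inter> verts G2 = {}"
    and "v1 \<in> verts G1" "nbrs G1 v1 = {x1, y1, z1}" "card {x1, y1, z1} = 3"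
    and "v2 \<in> verts G2" "nbrs G2 v2 = {x2, y2, z2}" "card {x2, y2, z2} = 3"
  shows "heavy_verts (bridge_op G1 v1 x1 y1 z1 G2 v2 x2 y2 z2) = heavy_verts G1 \<union> heavy_verts G2"
proof -
  have v: "degree G1 v1 = 3" "degree G2 v2 = 3"
    using assms by (simp_all add: degree_def)
  note deg = degree_bridge_op[OF assms]
  have "u \<in> heavy_verts (bridge_op G1 v1 x1 y1 z1 G2 v2 x2 y2 z2)
      \<longleftrightarrow> u \<in> heavy_verts G1 \<union> heavy_verts G2" for u
  proof (cases "u \<in> verts G1")
    case True
    with assms(3) have "u \<notin> verts G2"
      by blast
    with True show ?thesis
      using v deg[of u] by (cases "u = v1") (auto simp: heavy_verts_def verts_bridge_op)
  next
    case False
    then show ?thesis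
      using v deg[of u] by (cases "u = v2") (auto simp: heavy_verts_def verts_bridge_op)
  qed
  then show ?thesis
    by blast
qed

lemma constr_card_heavy_verts: "constr H j t p s \<Longrightarrow> card (heavy_verts H) = p"
proof (induction rule: constr.induct)
  case (base A)
  then show ?case
    by (simp add: heavy_verts_cubic cubic_K4)
next
  case (join H j t p s a b c d x y)
  then show ?case
    by (simp add: heavy_verts_cubic cubic_edge_join constr_simple_graph)
next
  case (bridge G1 j1 t1 p1 s1 G2 j2 t2 p2 s2 v1 x1 y1 z1 v2 x2 y2 z2)
  have "heavy_verts G1 \<inter> heavy_verts G2 = {}"
    using bridge.hyps(3) by (auto simp: heavy_verts_def)
  with bridge show ?case
    by (simp add: heavy_verts_bridge_op constr_simple_graph finite_heavy_verts card_Un_disjoint)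
next
  case (spoke_primary H j t p s a b x y)
  then have "heavy_verts H = {}"
    by (simp add: heavy_verts_single)
  with spoke_primary show ?case
    by (simp add: heavy_verts_spoke_op constr_simple_graph)
next
  case (spoke_secondary H j t p s a b x y)
  then have "heavy_verts H = {x}"
    by (simp add: heavy_verts_single)
  with spoke_secondary show ?case
    by (simp add: heavy_verts_spoke_op constr_simple_graph)
qed

text \<open>A primary spoke needs a cubic graph, and only a bridge operation makes room for another.\<close>
lemma constr_primary_le: "constr H j t p s \<Longrightarrow> p \<le> Suc j"
proof (induction rule: constr.induct)
  case (join H j t p s a b c d x y)
  then show ?case
    using constr_card_heavy_verts heavy_verts_cubic by fastforce
next
  case (spoke_primary H j t p s a b x y)
  then have "heavy_verts H = {}"
    by (simp add: heavy_verts_single)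
  with spoke_primary show ?case
    using constr_card_heavy_verts by fastforce
qed simp_all

lemma nu_constr:
  assumes H: "constr H j t p s"
  shows "nu H = card (verts H) - p"
proof -
  have fin: "finite (verts H)"
    using simple_graph_finite_verts constr_simple_graph[OF H] .
  have heavy: "heavy_verts H \<subseteq> verts H" "card (heavy_verts H) = p"
    using constr_card_heavy_verts[OF H] by (auto simp: heavy_verts_def)
  have cubic_part: "{v \<in> verts H. degree H v = 3} = verts H - heavy_verts H"
    using constr_degree_ge[OF H] by (force simp: heavy_verts_def)
  have "p < card (verts H)"
    using constr_card_verts[OF H] constr_primary_le[OF H] by simp
  then have "heavy_verts H \<noteq> verts H"
    using heavy by auto
  then obtain v where "v \<in> verts H - heavy_verts H"
    using heavy(1) by blast
  then have "v \<in> verts H" "degree H v = 3"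
    unfolding cubic_part[symmetric] by auto
  then have "min_degree H = 3"
    unfolding min_degree_def using fin constr_degree_ge[OF H]
    by (intro antisym Min.boundedI Min_le) (auto simp: image_iff)
  then show ?thesis
    unfolding nu_def using cubic_part heavy fin by (simp add: card_Diff_subset finite_subset)
qed

context
  fixes f :: "'a \<Rightarrow> 'b" and H :: "'a graph" and G :: "'b graph"
  assumes bij: "bij_betw f (verts H) (verts G)"
    and edge_iff: "\<forall>a\<in>verts H. \<forall>b\<in>verts H. {a, b} \<in> edges H \<longleftrightarrow> {f a, f b} \<in> edges G"
begin

lemma nbrs_iso:
  assumes a: "a \<in> verts H"
  shows "nbrs G (f a) = f ` nbrs H a"
proof -
  have inj: "inj_on f (verts H)" and onto: "verts G = f ` verts H"
    using bij by (auto simp: bij_betw_def)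
  have "f b \<in> nbrs G (f a) \<longleftrightarrow> b \<in> nbrs H a" if b: "b \<in> verts H" for b
    using a b edge_iff inj_on_eq_iff[OF inj a b] onto by (auto simp: mem_nbrs_iff)
  moreover have "nbrs G (f a) \<subseteq> f ` verts H" "nbrs H a \<subseteq> verts H"
    using onto by (auto simp: nbrs_def)
  ultimately show ?thesis
    by blast
qed

lemma degree_iso: "a \<in> verts H \<Longrightarrow> degree G (f a) = degree H a"
  using bij_betw_imp_inj_on[OF bij]
  by (simp add: degree_def nbrs_iso card_image inj_on_subset mem_nbrs_iff subset_iff)

lemma nu_iso: "nu G = nu H"
proof -
  have onto: "verts G = f ` verts H"
    using bij by (simp add: bij_betw_def)
  then have "min_degree G = min_degree H"
    unfolding min_degree_def by (simp add: image_image degree_iso cong: image_cong)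
  then have "{v \<in> verts G. degree G v = min_degree G} = f ` {v \<in> verts H. degree H v = min_degree H}"
    unfolding onto using degree_iso by auto
  moreover have "inj_on f {v \<in> verts H. degree H v = min_degree H}"
    using bij_betw_imp_inj_on[OF bij] by (rule inj_on_subset) auto
  ultimately show ?thesis
    unfolding nu_def by (simp add: card_image)
qed

end

lemma graph_iso_nu: "graph_iso H G \<Longrightarrow> nu G = nu H"
  unfolding graph_iso_def using nu_iso by blast

lemma graph_iso_card_verts: "graph_iso H G \<Longrightarrow> card (verts G) = card (verts H)"
  unfolding graph_iso_def by (metis bij_betw_same_card)

lemma extremal_iff:
  "extremal G \<longleftrightarrow> 2 * card (verts G) + 2 \<le> 3 * nu G \<and> 3 * nu G < 2 * card (verts G) + 5"
proof -
  let ?n = "card (verts G)"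
  have "extremal G \<longleftrightarrow>
      real (nu G) - 1 < (2 * real ?n + 2) / 3 \<and> (2 * real ?n + 2) / 3 \<le> real (nu G)"
    unfolding extremal_def by (metis ceiling_eq_iff of_int_of_nat_eq)
  also have "\<dots> \<longleftrightarrow> 2 * ?n + 2 \<le> 3 * nu G \<and> 3 * nu G < 2 * ?n + 5"
    by (simp add: field_simps) linarith
  finally show ?thesis .
qed

lemma construction_counts:
  fixes n k j t p s :: nat and l :: int
  assumes n: "n = 2 * j + 4 + 2 * t + p + s" and p: "p \<le> Suc j"
    and lower: "2 * n + 2 \<le> 3 * (n - p)" and upper: "3 * (n - p) < 2 * n + 5"
    and nk: "int n = 3 * int k + l" and l: "l \<in> {-1, 0, 1}"
  shows "p = k - 1
    \<and> (l = -1 \<longrightarrow> j = k - 2 \<and> t = 0 \<and> s = 0)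
    \<and> (l = 0 \<longrightarrow> j = k - 2 \<and> t = 0 \<and> s = 1)
    \<and> (l = 1 \<longrightarrow> (j = k - 1 \<and> t = 0 \<and> s = 0) \<or> (j = k - 2 \<and> t = 1 \<and> s = 0)
                   \<or> (j = k - 2 \<and> t = 0 \<and> s = 2))"
proof -
  have k: "k = Suc p"
    using lower upper nk l by auto
  have eq: "2 * int p + 3 + l = 2 * int j + 4 + 2 * int t + int s"
    using n nk k by linarith
  consider "l = -1" | "l = 0" | "l = 1"
    using l by auto
  then show ?thesis
  proof cases
    case 1
    then show ?thesis
      using eq p k by auto
  next
    case 2
    then have "t = 0 \<and> s = 1 \<and> p = Suc j"
      using eq p by presburger
    then show ?thesis
      using 2 k by auto
  next
    case 3
    then have "(t = 0 \<and> s = 0 \<and> p = j) \<or> (t = 1 \<and> s = 0 \<and> p = Suc j)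
        \<or> (t = 0 \<and> s = 2 \<and> p = Suc j)"
      using eq p by presburger
    then show ?thesis
      using 3 k by auto
  qed
qed

theorem theorem16:
  fixes G :: "'a graph" and H :: "nat graph"
    and n k j t p s :: nat and l :: int
  assumes "simple_graph G"
    and "uniformly_connected 3 G"
    and "extremal G"
    and "n = card (verts G)"
    and "int n = 3 * int k + l"
    and "n \<ge> 5"
    and "k \<noteq> 1"
    and "l \<in> {-1, 0, 1}"
    and "constr H j t p s"
    and "graph_iso H G"
  shows "p = k - 1
    \<and> (l = -1 \<longrightarrow> j = k - 2 \<and> t = 0 \<and> s = 0)
    \<and> (l = 0 \<longrightarrow> j = k - 2 \<and> t = 0 \<and> s = 1)
    \<and> (l = 1 \<longrightarrow> (j = k - 1 \<and> t = 0 \<and> s = 0) \<or> (j = k - 2 \<and> t = 1 \<and> s = 0)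
                   \<or> (j = k - 2 \<and> t = 0 \<and> s = 2))"
proof -
  have n: "n = card (verts H)"
    using assms(4,10) graph_iso_card_verts by simp
  have "nu G = n - p"
    using graph_iso_nu[OF assms(10)] nu_constr[OF assms(9)] n by simp
  with assms(3,4) have "2 * n + 2 \<le> 3 * (n - p)" "3 * (n - p) < 2 * n + 5"
    unfolding extremal_iff by simp_all
  moreover have "n = 2 * j + 4 + 2 * t + p + s" "p \<le> Suc j"
    using assms(9) n constr_card_verts constr_primary_le by simp_all
  ultimately show ?thesis
    using assms(5,8) by (intro construction_counts)
qed

end
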